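(* Let $R$ be a ring and let $A$ be an $(R,R)$-bimodule which is also a (not necessarily unital) associative ring such that $(aw)r=a(wr)$, $(ar)w=a(rw)$ and $(ra)w=r(aw)$ for all $a,w\in A$, $r\in R$. Suppose that for every $a\in A$ there exists $w\in A$ with $a+w+aw=0$. Let $S=I(R;A)$ be the Dorroh (ideal) extension, i.e. the additive group $R\oplus A$ with multiplication $(r,a)(s,w)=(rs,\,rw+as+aw)$. Then $R$ is NJ-symmetric if and only if $S$ is NJ-symmetric.
   Context: Rings are associative; $R$ has identity. $N(T)$ is the set of nilpotent elements, $J(T)$ the Jacobson radical of a ring $T$. $T$ is NJ-symmetric if for all $a,b,c\in T$, $abc\in N(T)$ implies $bac\in J(T)$. *)

theory Defs
  imports "HOL-Algebra.Ring"
begin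

definition class_ring :: "('r::ring_1) ring" where
  "class_ring = \<lparr>carrier = UNIV, mult = (*), one = 1, zero = 0, add = (+)\<rparr>"

text \<open>The Dorroh (ideal) extension I(R;A) = R \<oplus> A with
  (r,a)(s,w) = (rs, rw + as + aw); lm is the left and rm the right R-action on A.\<close>
definition dorroh :: "('r::ring_1 \<Rightarrow> 'a::ring \<Rightarrow> 'a) \<Rightarrow> ('a \<Rightarrow> 'r \<Rightarrow> 'a) \<Rightarrow> ('r \<times> 'a) ring" where
  "dorroh lm rm = \<lparr>carrier = UNIV,
     mult = (\<lambda>(r, a) (s, w). (r * s, lm r w + rm a s + a * w)),
     one = (1, 0), zero = (0, 0),
     add = (\<lambda>(r, a) (s, w). (r + s, a + w))\<rparr>"

definition nilpotents :: "('x, 'm) ring_scheme \<Rightarrow> 'x set" where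
  "nilpotents T = {x \<in> carrier T. \<exists>n::nat. x [^]\<^bsub>T\<^esub> n = \<zero>\<^bsub>T\<^esub>}"

definition left_ideal :: "('x, 'm) ring_scheme \<Rightarrow> 'x set \<Rightarrow> bool" where
  "left_ideal T I \<longleftrightarrow> I \<subseteq> carrier T \<and> \<zero>\<^bsub>T\<^esub> \<in> I
     \<and> (\<forall>x\<in>I. \<forall>y\<in>I. x \<oplus>\<^bsub>T\<^esub> y \<in> I)
     \<and> (\<forall>x\<in>I. \<ominus>\<^bsub>T\<^esub> x \<in> I)
     \<and> (\<forall>r\<in>carrier T. \<forall>x\<in>I. r \<otimes>\<^bsub>T\<^esub> x \<in> I)"

definition maximal_left_ideal :: "('x, 'm) ring_scheme \<Rightarrow> 'x set \<Rightarrow> bool" where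
  "maximal_left_ideal T I \<longleftrightarrow> left_ideal T I \<and> I \<noteq> carrier T
     \<and> (\<forall>J. left_ideal T J \<and> I \<subseteq> J \<longrightarrow> J = I \<or> J = carrier T)"

text \<open>Jacobson radical: intersection of all maximal left ideals (carrier if there are none).\<close>
definition jacobson :: "('x, 'm) ring_scheme \<Rightarrow> 'x set" where
  "jacobson T = carrier T \<inter> \<Inter>{I. maximal_left_ideal T I}"

definition NJ_symmetric :: "('x, 'm) ring_scheme \<Rightarrow> bool" where
  "NJ_symmetric T \<longleftrightarrow> (\<forall>a\<in>carrier T. \<forall>b\<in>carrier T. \<forall>c\<in>carrier T.
     a \<otimes>\<^bsub>T\<^esub> b \<otimes>\<^bsub>T\<^esub> c \<in> nilpotents T \<longrightarrow> b \<otimes>\<^bsub>T\<^esub> a \<otimes>\<^bsub>T\<^esub> c \<in> jacobson T)"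

end

theory Submission
  imports Defs
begin

text \<open>Since \<open>A\<close> is quasi-regular, every maximal left ideal \<open>M\<close> of \<open>S = I(R;A)\<close>
  contains \<open>0 \<times> A\<close>: otherwise \<open>M + (0 \<times> A)\<close> is all of \<open>S\<close>, so it contains some \<open>(1, x)\<close>,
  and a left quasi-inverse \<open>u\<close> of \<open>x\<close> gives \<open>(1, u)(1, x) = (1, 0) \<in> M\<close>. Hence the
  maximal left ideals of \<open>S\<close> are exactly the \<open>N \<times> A\<close> with \<open>N\<close> maximal in \<open>R\<close>, and
  \<open>J(S) = J(R) \<times> A\<close>. As the first coordinate is multiplicative, nilpotents of \<open>S\<close>
  project to nilpotents of \<open>R\<close>, and \<open>r \<mapsto> (r, 0)\<close> embeds nilpotents of \<open>R\<close> into \<open>S\<close>;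
  so NJ-symmetry transfers in both directions.\<close>

lemma class_ring_simps [simp]:
  "carrier (class_ring :: 'r::ring_1 ring) = UNIV"
  "(x::'r) \<otimes>\<^bsub>class_ring\<^esub> y = x * y"
  "(x::'r) \<oplus>\<^bsub>class_ring\<^esub> y = x + y"
  "\<one>\<^bsub>(class_ring :: 'r ring)\<^esub> = 1"
  "\<zero>\<^bsub>(class_ring :: 'r ring)\<^esub> = 0"
  by (simp_all add: class_ring_def)

lemma class_ring_a_inv [simp]: "\<ominus>\<^bsub>class_ring\<^esub> (x::'r::ring_1) = - x"
  unfolding a_inv_def m_inv_def
  by (rule the_equality) (auto simp: class_ring_def eq_neg_iff_add_eq_0 add.commute)

lemma class_ring_pow [simp]: "(x::'r::ring_1) [^]\<^bsub>class_ring\<^esub> (n::nat) = x ^ n"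
  by (induction n) (auto simp: power_commutes)

lemma dorroh_simps [simp]:
  "carrier (dorroh lm rm) = UNIV"
  "(r, a) \<otimes>\<^bsub>dorroh lm rm\<^esub> (s, w) = (r * s, lm r w + rm a s + a * w)"
  "(r, a) \<oplus>\<^bsub>dorroh lm rm\<^esub> (s, w) = (r + s, a + w)"
  "\<one>\<^bsub>dorroh lm rm\<^esub> = (1, 0)"
  "\<zero>\<^bsub>dorroh lm rm\<^esub> = (0, 0)"
  by (simp_all add: dorroh_def)

lemma dorroh_a_inv [simp]: "\<ominus>\<^bsub>dorroh lm rm\<^esub> (r, a) = (- r, - a)"
  unfolding a_inv_def m_inv_def
  by (rule the_equality) (auto simp: dorroh_def eq_neg_iff_add_eq_0 add.commute)

lemma fst_dorroh_mult: "fst (x \<otimes>\<^bsub>dorroh lm rm\<^esub> y) = fst x * fst y"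
  by (simp add: dorroh_def split: prod.splits)

lemma fst_dorroh_pow: "fst (x [^]\<^bsub>dorroh lm rm\<^esub> (n::nat)) = fst x ^ n"
  by (induction n) (auto simp: power_commutes dorroh_def split: prod.splits)

lemma nilpotents_dorroh_fst:
  assumes "x \<in> nilpotents (dorroh lm rm)"
  shows "fst x \<in> nilpotents class_ring"
proof -
  obtain n :: nat where "x [^]\<^bsub>dorroh lm rm\<^esub> n = (0, 0)"
    using assms unfolding nilpotents_def by auto
  then have "fst x ^ n = 0" by (metis fst_conv fst_dorroh_pow)
  then show ?thesis unfolding nilpotents_def by auto
qed

lemma left_ideal_dorroh_times_UNIV:
  "left_ideal class_ring N \<Longrightarrow> left_ideal (dorroh lm rm) (N \<times> UNIV)"
  unfolding left_ideal_def by auto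

lemma left_ideal_image_fst:
  assumes "left_ideal (dorroh lm rm) M"
  shows "left_ideal class_ring (fst ` M)"
proof -
  have closed: "(0, 0) \<in> M" "\<And>x y. x \<in> M \<Longrightarrow> y \<in> M \<Longrightarrow> x \<oplus>\<^bsub>dorroh lm rm\<^esub> y \<in> M"
    "\<And>x. x \<in> M \<Longrightarrow> \<ominus>\<^bsub>dorroh lm rm\<^esub> x \<in> M" "\<And>r x. x \<in> M \<Longrightarrow> r \<otimes>\<^bsub>dorroh lm rm\<^esub> x \<in> M"
    using assms[unfolded left_ideal_def dorroh_simps(1,5)] by blast+
  show ?thesis unfolding left_ideal_def class_ring_simps
  proof (intro conjI ballI)
    show "0 \<in> fst ` M" using closed(1) by force
  next
    fix r s assume "r \<in> fst ` M" "s \<in> fst ` M"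
    then obtain a b where "(r, a) \<in> M" "(s, b) \<in> M" by force
    then show "r + s \<in> fst ` M" using closed(2) by force
  next
    fix r assume "r \<in> fst ` M"
    then obtain a where "(r, a) \<in> M" by force
    then show "\<ominus>\<^bsub>class_ring\<^esub> r \<in> fst ` M" using closed(3) by force
  next
    fix r s assume "s \<in> fst ` M"
    then obtain a where "(s, a) \<in> M" by force
    then show "r * s \<in> fst ` M" using closed(4)[of "(s, a)" "(r, 0)"] by force
  qed simp
qed

lemma left_ideal_dorroh_saturated:
  fixes lm :: "'r::ring_1 \<Rightarrow> 'a::ring \<Rightarrow> 'a" and rm :: "'a \<Rightarrow> 'r \<Rightarrow> 'a"
  assumes "left_ideal (dorroh lm rm) K" and "{0} \<times> UNIV \<subseteq> K"
  shows "K = fst ` K \<times> UNIV"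
proof (rule equalityI)
  show "K \<subseteq> fst ` K \<times> UNIV" by force
  show "fst ` K \<times> UNIV \<subseteq> K"
  proof (rule subsetI)
    fix x :: "'r \<times> 'a" assume "x \<in> fst ` K \<times> UNIV"
    then obtain r a b where x: "x = (r, a)" and "(r, b) \<in> K" by force
    moreover have "(0, a - b) \<in> K" using assms(2) by blast
    ultimately have "(r, b) \<oplus>\<^bsub>dorroh lm rm\<^esub> (0, a - b) \<in> K"
      using assms(1) unfolding left_ideal_def by blast
    then show "x \<in> K" using x by simp
  qed
qed

lemma left_quasi_inverse:
  fixes b :: "'a::ring"
  assumes right_quasi_inverse: "\<And>a::'a. \<exists>w. a + w + a * w = 0"
  shows "\<exists>u. u + b + u * b = 0"
proof -
  obtain w where w: "b + w + b * w = 0" using right_quasi_inverse by blast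
  obtain v where v: "w + v + w * v = 0" using right_quasi_inverse by blast
  have "(b + w + b * w) + v + (b + w + b * w) * v = b + (w + v + w * v) + b * (w + v + w * v)"
    by (simp add: algebra_simps)
  then have "v = b" using v w by simp
  with v show ?thesis by blast
qed

locale dorroh_quasiregular =
  fixes lm :: "'r::ring_1 \<Rightarrow> 'a::ring \<Rightarrow> 'a" and rm :: "'a \<Rightarrow> 'r \<Rightarrow> 'a"
  assumes lm_add_right: "\<And>r a w. lm r (a + w) = lm r a + lm r w"
    and lm_one: "\<And>a. lm 1 a = a"
    and rm_add_left: "\<And>a w r. rm (a + w) r = rm a r + rm w r"
    and rm_one: "\<And>a. rm a 1 = a"
    and qreg: "\<And>a::'a. \<exists>w. a + w + a * w = 0"
begin

abbreviation S :: "('r \<times> 'a) ring" where "S \<equiv> dorroh lm rm"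

lemma lm_zero [simp]: "lm r 0 = 0"
  using lm_add_right[of r 0 0] by simp

lemma rm_zero [simp]: "rm 0 r = 0"
  using rm_add_left[of 0 0 r] by simp

lemma dorroh_pow_embed: "(r, 0) [^]\<^bsub>S\<^esub> (n::nat) = (r ^ n, 0)"
  by (induction n) (auto simp: power_commutes)

lemma embed_in_nilpotents_dorroh:
  "r \<in> nilpotents class_ring \<Longrightarrow> (r, 0) \<in> nilpotents S"
  unfolding nilpotents_def by (auto simp: dorroh_pow_embed)

lemma left_ideal_dorroh_eq_UNIV:
  assumes M: "left_ideal S M" and one_x: "(1, x) \<in> M"
  shows "M = UNIV"
proof -
  have mult: "\<And>y z. z \<in> M \<Longrightarrow> y \<otimes>\<^bsub>S\<^esub> z \<in> M"
    using M[unfolded left_ideal_def] by (metis UNIV_I dorroh_simps(1))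
  obtain u where "u + x + u * x = 0" using left_quasi_inverse qreg by blast
  then have "(1, u) \<otimes>\<^bsub>S\<^esub> (1, x) = (1, 0)"
    by (simp add: lm_one rm_one add.commute)
  then have one: "(1, 0) \<in> M" using mult[OF one_x] by metis
  have "(r, a) = (r, a) \<otimes>\<^bsub>S\<^esub> (1, 0)" for r a by (simp add: rm_one)
  then show ?thesis using mult[OF one] by (metis UNIV_eq_I surj_pair)
qed

lemma maximal_left_ideal_dorroh_saturated:
  assumes "maximal_left_ideal S M"
  shows "M = fst ` M \<times> UNIV"
proof -
  have M: "left_ideal S M" "M \<noteq> UNIV"
    and maximal: "\<And>J. left_ideal S J \<Longrightarrow> M \<subseteq> J \<Longrightarrow> J = M \<or> J = UNIV"
    using assms unfolding maximal_left_ideal_def by auto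
  have "left_ideal S (fst ` M \<times> UNIV)"
    using left_ideal_dorroh_times_UNIV left_ideal_image_fst M(1) by blast
  moreover have "M \<subseteq> fst ` M \<times> UNIV" by force
  ultimately have "fst ` M \<times> UNIV = M \<or> fst ` M \<times> UNIV = (UNIV :: ('r \<times> 'a) set)"
    by (rule maximal)
  moreover have "1 \<notin> fst ` M" using left_ideal_dorroh_eq_UNIV M by force
  ultimately show ?thesis by blast
qed

lemma maximal_left_ideal_image_fst:
  assumes "maximal_left_ideal S M"
  shows "maximal_left_ideal class_ring (fst ` M)"
  unfolding maximal_left_ideal_def class_ring_simps(1)
proof (intro conjI allI impI)
  have M: "left_ideal S M" "M \<noteq> UNIV"
    and maximal: "\<And>J. left_ideal S J \<Longrightarrow> M \<subseteq> J \<Longrightarrow> J = M \<or> J = UNIV"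
    using assms unfolding maximal_left_ideal_def by auto
  have saturated: "M = fst ` M \<times> UNIV"
    using maximal_left_ideal_dorroh_saturated assms .
  show "left_ideal class_ring (fst ` M)" by (rule left_ideal_image_fst[OF M(1)])
  show "fst ` M \<noteq> UNIV" using M(2) saturated by (metis UNIV_Times_UNIV)
  fix N :: "'r set" assume N: "left_ideal class_ring N \<and> fst ` M \<subseteq> N"
  then have "left_ideal S (N \<times> UNIV)" by (simp add: left_ideal_dorroh_times_UNIV)
  moreover have "M \<subseteq> N \<times> UNIV" using N by (force simp: subset_iff)
  ultimately have "N \<times> UNIV = M \<or> N \<times> UNIV = (UNIV :: ('r \<times> 'a) set)"
    by (rule maximal)
  then show "N = fst ` M \<or> N = UNIV"
    by (metis fst_image_times UNIV_not_empty UNIV_Times_UNIV)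
qed

lemma maximal_left_ideal_dorroh_times_UNIV:
  assumes "maximal_left_ideal class_ring N"
  shows "maximal_left_ideal S (N \<times> UNIV)"
  unfolding maximal_left_ideal_def dorroh_simps(1)
proof (intro conjI allI impI)
  have N: "left_ideal class_ring N" "N \<noteq> UNIV"
    and maximal: "\<And>J. left_ideal class_ring J \<Longrightarrow> N \<subseteq> J \<Longrightarrow> J = N \<or> J = UNIV"
    using assms unfolding maximal_left_ideal_def by auto
  show "left_ideal S (N \<times> UNIV)" by (rule left_ideal_dorroh_times_UNIV[OF N(1)])
  show "N \<times> UNIV \<noteq> UNIV" using N(2) by (metis UNIV_Times_UNIV fst_image_times UNIV_not_empty)
  fix K assume K: "left_ideal S K \<and> N \<times> UNIV \<subseteq> K"
  moreover have "0 \<in> N" using N(1) unfolding left_ideal_def by simp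
  ultimately have saturated: "K = fst ` K \<times> UNIV" using left_ideal_dorroh_saturated by blast
  have "left_ideal class_ring (fst ` K)" using K left_ideal_image_fst by blast
  moreover have "N \<subseteq> fst ` K" using K by force
  ultimately have "fst ` K = N \<or> fst ` K = UNIV" by (rule maximal)
  then show "K = N \<times> UNIV \<or> K = UNIV" using saturated by auto
qed

lemma maximal_left_ideals_dorroh:
  "{M. maximal_left_ideal S M} = (\<lambda>N. N \<times> UNIV) ` {N. maximal_left_ideal class_ring N}"
  using maximal_left_ideal_dorroh_saturated maximal_left_ideal_image_fst
    maximal_left_ideal_dorroh_times_UNIV by blast

lemma jacobson_dorroh: "jacobson S = jacobson class_ring \<times> UNIV"
  unfolding jacobson_def maximal_left_ideals_dorroh by auto

lemma NJ_symmetric_dorroh_if_NJ_symmetric: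
  assumes R: "NJ_symmetric (class_ring :: 'r ring)"
  shows "NJ_symmetric S"
  unfolding NJ_symmetric_def
proof (intro ballI impI)
  fix x y z assume "x \<otimes>\<^bsub>S\<^esub> y \<otimes>\<^bsub>S\<^esub> z \<in> nilpotents S"
  then have "fst x * fst y * fst z \<in> nilpotents class_ring"
    using nilpotents_dorroh_fst by (fastforce simp: fst_dorroh_mult)
  then have "fst y * fst x * fst z \<in> jacobson class_ring"
    using R unfolding NJ_symmetric_def by simp
  then show "y \<otimes>\<^bsub>S\<^esub> x \<otimes>\<^bsub>S\<^esub> z \<in> jacobson S"
    by (simp add: jacobson_dorroh mem_Times_iff fst_dorroh_mult)
qed

lemma NJ_symmetric_if_NJ_symmetric_dorroh:
  assumes S: "NJ_symmetric S"
  shows "NJ_symmetric (class_ring :: 'r ring)"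
  unfolding NJ_symmetric_def
proof (intro ballI impI)
  fix a b c :: 'r
  assume "a \<otimes>\<^bsub>class_ring\<^esub> b \<otimes>\<^bsub>class_ring\<^esub> c \<in> nilpotents class_ring"
  then have "(a, 0) \<otimes>\<^bsub>S\<^esub> (b, 0) \<otimes>\<^bsub>S\<^esub> (c, 0) \<in> nilpotents S"
    using embed_in_nilpotents_dorroh by simp
  then have "(b, 0) \<otimes>\<^bsub>S\<^esub> (a, 0) \<otimes>\<^bsub>S\<^esub> (c, 0) \<in> jacobson S"
    using S unfolding NJ_symmetric_def dorroh_simps(1) by blast
  then show "b \<otimes>\<^bsub>class_ring\<^esub> a \<otimes>\<^bsub>class_ring\<^esub> c \<in> jacobson class_ring"
    by (simp add: jacobson_dorroh)
qed

end

theorem proposition2p26: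
  fixes lm :: "'r::ring_1 \<Rightarrow> 'a::ring \<Rightarrow> 'a" and rm :: "'a \<Rightarrow> 'r \<Rightarrow> 'a"
  assumes lm_add_right: "\<And>r a w. lm r (a + w) = lm r a + lm r w"
    and lm_add_left: "\<And>r s a. lm (r + s) a = lm r a + lm s a"
    and lm_mult: "\<And>r s a. lm (r * s) a = lm r (lm s a)"
    and lm_one: "\<And>a. lm 1 a = a"
    and rm_add_left: "\<And>a w r. rm (a + w) r = rm a r + rm w r"
    and rm_add_right: "\<And>a r s. rm a (r + s) = rm a r + rm a s"
    and rm_mult: "\<And>a r s. rm a (r * s) = rm (rm a r) s"
    and rm_one: "\<And>a. rm a 1 = a"
    and bimod: "\<And>r a s. rm (lm r a) s = lm r (rm a s)"
    and comp1: "\<And>a w r. rm (a * w) r = a * rm w r"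
    and comp2: "\<And>a r w. rm a r * w = a * lm r w"
    and comp3: "\<And>r a w. lm r a * w = lm r (a * w)"
    and qreg: "\<And>a::'a. \<exists>w. a + w + a * w = 0"
  shows "NJ_symmetric (class_ring :: 'r ring) \<longleftrightarrow> NJ_symmetric (dorroh lm rm)"
proof -
  interpret dorroh_quasiregular lm rm
    by unfold_locales (fact lm_add_right lm_one rm_add_left rm_one qreg)+
  show ?thesis
    using NJ_symmetric_dorroh_if_NJ_symmetric NJ_symmetric_if_NJ_symmetric_dorroh by blast
qed

end
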